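(* Let $S$ be a functional PTS specification. For all terms $M,N,A,B$ of the $\lambda\Pi/S$ syntax such that the relevant inverse translations are defined: (1) if $M\equiv_{\beta R}N$ then $\varphi(M)\equiv_\beta\varphi(N)$; (2) if $A\equiv_{\beta R}B$ then $\psi(A)\equiv_\beta\psi(B)$.
   Context: $S=(\mathcal S,\mathcal A,\mathcal R)$ is a PTS specification (sorts, axioms $(s_1:s_2)$, rules $(s_1,s_2,s_3)$). Terms are $s\mid x\mid M\,N\mid\lambda x:A.M\mid\Pi x:A.B$ over constants $u_s,\varepsilon_s$ ($s\in\mathcal S$), $\dot s_1$ ($(s_1:s_2)\in\mathcal A$), $\dot\pi_{s_1s_2s_3}$ ($(s_1,s_2,s_3)\in\mathcal R$). $\longrightarrow_{\beta R}$ is the union of $\beta$-reduction and the contextual closure of the rules $\varepsilon_{s_2}\,\dot s_1\longrightarrow u_{s_1}$ ($(s_1:s_2)\in\mathcal A$) and $\varepsilon_{s_3}(\dot\pi_{s_1s_2s_3}AB)\longrightarrow\Pi x:\varepsilon_{s_1}A.\varepsilon_{s_2}(B\,x)$ ($(s_1,s_2,s_3)\in\mathcal R$); $\equiv_{\beta R}$ is the congruence it generates. Inverse translations (partial): $\varphi(\dot s)=s$, $\varphi(\dot\pi_{s_1s_2s_3})=\lambda\alpha:s_1.\lambda\beta:(\alpha\to s_2).\Pi x:\alpha.\beta\,x$, $\varphi(x)=x$, $\varphi(M\,N)=\varphi(M)\varphi(N)$, $\varphi(\lambda x:A.M)=\lambda x:\psi(A).\varphi(M)$; $\psi(u_s)=s$,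 $\psi(\varepsilon_sM)=\varphi(M)$, $\psi(\Pi x:A.B)=\Pi x:\psi(A).\psi(B)$. *)

theory Defs
  imports Main
begin

text \<open>Terms with atoms of type 'a, variables as de Bruijn indices, application,
  typed abstraction and dependent product. The binder of Lam A M and Pi A B binds
  index 0 in the second argument.\<close>

datatype 'a trm =
    Atm 'a
  | Var nat
  | App "'a trm" "'a trm"
  | Lam "'a trm" "'a trm"
  | Pi "'a trm" "'a trm"

fun lift :: "nat \<Rightarrow> 'a trm \<Rightarrow> 'a trm" where
  "lift k (Atm a) = Atm a"
| "lift k (Var i) = (if i < k then Var i else Var (Suc i))"
| "lift k (App M N) = App (lift k M) (lift k N)"
| "lift k (Lam A M) = Lam (lift k A) (lift (Suc k) M)"
| "lift k (Pi A B) = Pi (lift k A) (lift (Suc k) B)"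

fun subst :: "'a trm \<Rightarrow> nat \<Rightarrow> 'a trm \<Rightarrow> 'a trm" where
  "subst (Atm a) k N = Atm a"
| "subst (Var i) k N = (if i < k then Var i else if i = k then N else Var (i - 1))"
| "subst (App M1 M2) k N = App (subst M1 k N) (subst M2 k N)"
| "subst (Lam A M) k N = Lam (subst A k N) (subst M (Suc k) (lift 0 N))"
| "subst (Pi A B) k N = Pi (subst A k N) (subst B (Suc k) (lift 0 N))"

inductive ctxc :: "('a trm \<Rightarrow> 'a trm \<Rightarrow> bool) \<Rightarrow> 'a trm \<Rightarrow> 'a trm \<Rightarrow> bool"
  for r where
  root: "r M N \<Longrightarrow> ctxc r M N"
| appL: "ctxc r M M' \<Longrightarrow> ctxc r (App M N) (App M' N)"
| appR: "ctxc r N N' \<Longrightarrow> ctxc r (App M N) (App M N')"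
| lamL: "ctxc r A A' \<Longrightarrow> ctxc r (Lam A M) (Lam A' M)"
| lamR: "ctxc r M M' \<Longrightarrow> ctxc r (Lam A M) (Lam A M')"
| piL: "ctxc r A A' \<Longrightarrow> ctxc r (Pi A B) (Pi A' B)"
| piR: "ctxc r B B' \<Longrightarrow> ctxc r (Pi A B) (Pi A B')"

inductive beta_root :: "'a trm \<Rightarrow> 'a trm \<Rightarrow> bool" where
  "beta_root (App (Lam A M) N) (subst M 0 N)"

definition beta_step :: "'a trm \<Rightarrow> 'a trm \<Rightarrow> bool" where
  "beta_step = ctxc beta_root"

definition beta_conv :: "'a trm \<Rightarrow> 'a trm \<Rightarrow> bool" where
  "beta_conv = equivclp beta_step"

text \<open>A specification is (S, Ax, Rl): sorts, axioms (s1 : s2), rules (s1, s2, s3).\<close>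
definition pts_spec :: "'s set \<Rightarrow> ('s \<times> 's) set \<Rightarrow> ('s \<times> 's \<times> 's) set \<Rightarrow> bool" where
  "pts_spec S Ax Rl \<longleftrightarrow> Ax \<subseteq> S \<times> S \<and> Rl \<subseteq> S \<times> S \<times> S"

definition functional_pts :: "'s set \<Rightarrow> ('s \<times> 's) set \<Rightarrow> ('s \<times> 's \<times> 's) set \<Rightarrow> bool" where
  "functional_pts S Ax Rl \<longleftrightarrow> pts_spec S Ax Rl
     \<and> (\<forall>s1 s2 s2'. (s1, s2) \<in> Ax \<longrightarrow> (s1, s2') \<in> Ax \<longrightarrow> s2 = s2')
     \<and> (\<forall>s1 s2 s3 s3'. (s1, s2, s3) \<in> Rl \<longrightarrow> (s1, s2, s3') \<in> Rl \<longrightarrow> s3 = s3')"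

text \<open>PTS terms over sorts 's are 's trm (Atm s is the sort s).\<close>

text \<open>Atoms of lambda-Pi/S: the lambda-Pi sorts Type and Kind, and the constants
  u_s, eps_s, dot-s1, dot-pi_{s1 s2 s3}.\<close>
datatype 's lpconst =
    LType | LKind
  | U 's | Eps 's | Dot 's | PiC 's 's 's

type_synonym 's lpterm = "'s lpconst trm"

fun wf_const :: "'s set \<Rightarrow> ('s \<times> 's) set \<Rightarrow> ('s \<times> 's \<times> 's) set \<Rightarrow> 's lpconst \<Rightarrow> bool" where
  "wf_const S Ax Rl LType = True"
| "wf_const S Ax Rl LKind = True"
| "wf_const S Ax Rl (U s) = (s \<in> S)"
| "wf_const S Ax Rl (Eps s) = (s \<in> S)"
| "wf_const S Ax Rl (Dot s1) = (\<exists>s2. (s1, s2) \<in> Ax)"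
| "wf_const S Ax Rl (PiC s1 s2 s3) = ((s1, s2, s3) \<in> Rl)"

fun wf_lp :: "'s set \<Rightarrow> ('s \<times> 's) set \<Rightarrow> ('s \<times> 's \<times> 's) set \<Rightarrow> 's lpterm \<Rightarrow> bool" where
  "wf_lp S Ax Rl (Atm c) = wf_const S Ax Rl c"
| "wf_lp S Ax Rl (Var i) = True"
| "wf_lp S Ax Rl (App M N) = (wf_lp S Ax Rl M \<and> wf_lp S Ax Rl N)"
| "wf_lp S Ax Rl (Lam A M) = (wf_lp S Ax Rl A \<and> wf_lp S Ax Rl M)"
| "wf_lp S Ax Rl (Pi A B) = (wf_lp S Ax Rl A \<and> wf_lp S Ax Rl B)"

text \<open>Root rewrite rules R:
  eps_{s2} (dot s1) --> u_{s1}   for (s1 : s2) in Ax;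
  eps_{s3} (dot-pi_{s1 s2 s3} A B) --> Pi x : eps_{s1} A. eps_{s2} (B x)   for (s1,s2,s3) in Rl.\<close>
inductive R_root :: "('s \<times> 's) set \<Rightarrow> ('s \<times> 's \<times> 's) set \<Rightarrow> 's lpterm \<Rightarrow> 's lpterm \<Rightarrow> bool"
  for Ax Rl where
  ax: "(s1, s2) \<in> Ax \<Longrightarrow> R_root Ax Rl (App (Atm (Eps s2)) (Atm (Dot s1))) (Atm (U s1))"
| rl: "(s1, s2, s3) \<in> Rl \<Longrightarrow>
     R_root Ax Rl (App (Atm (Eps s3)) (App (App (Atm (PiC s1 s2 s3)) A) B))
       (Pi (App (Atm (Eps s1)) A) (App (Atm (Eps s2)) (App (lift 0 B) (Var 0))))"

definition betaR_step :: "('s \<times> 's) set \<Rightarrow> ('s \<times> 's \<times> 's) set \<Rightarrow> 's lpterm \<Rightarrow> 's lpterm \<Rightarrow> bool" where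
  "betaR_step Ax Rl = ctxc (\<lambda>M N. beta_root M N \<or> R_root Ax Rl M N)"

definition betaR_conv :: "('s \<times> 's) set \<Rightarrow> ('s \<times> 's \<times> 's) set \<Rightarrow> 's lpterm \<Rightarrow> 's lpterm \<Rightarrow> bool" where
  "betaR_conv Ax Rl = equivclp (betaR_step Ax Rl)"

text \<open>phi(dot-pi_{s1 s2 s3}) = lambda alpha:s1. lambda beta:(alpha -> s2). Pi x:alpha. beta x,
  written with de Bruijn indices.\<close>
definition phi_pi :: "'s \<Rightarrow> 's \<Rightarrow> 's trm" where
  "phi_pi s1 s2 = Lam (Atm s1) (Lam (Pi (Var 0) (Atm s2)) (Pi (Var 1) (App (Var 1) (Var 0))))"

fun phi :: "'s lpterm \<Rightarrow> 's trm option"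
and psi :: "'s lpterm \<Rightarrow> 's trm option" where
  "phi (Atm (Dot s)) = Some (Atm s)"
| "phi (Atm (PiC s1 s2 s3)) = Some (phi_pi s1 s2)"
| "phi (Atm _) = None"
| "phi (Var x) = Some (Var x)"
| "phi (App M N) = (case (phi M, phi N) of (Some M', Some N') \<Rightarrow> Some (App M' N') | _ \<Rightarrow> None)"
| "phi (Lam A M) = (case (psi A, phi M) of (Some A', Some M') \<Rightarrow> Some (Lam A' M') | _ \<Rightarrow> None)"
| "phi (Pi A B) = None"
| "psi (Atm (U s)) = Some (Atm s)"
| "psi (App (Atm (Eps s)) M) = phi M"
| "psi (Pi A B) = (case (psi A, psi B) of (Some A', Some B') \<Rightarrow> Some (Pi A' B') | _ \<Rightarrow> None)"
| "psi _ = None"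

end

theory Submission
  imports Defs "HOL-Library.Confluence"
begin

text \<open>The rewrite system \<open>\<beta>R\<close> is orthogonal, hence confluent: parallel reduction has the diamond
  property, witnessed by Takahashi's complete development. On the other hand, every \<open>\<beta>R\<close>-step between
  translatable terms is mirrored by \<open>\<beta>\<close>-steps between their translations: a \<open>\<beta>\<close>-step by a \<open>\<beta>\<close>-step,
  an axiom step by none at all, and a rule step by the two \<open>\<beta>\<close>-steps that unfold \<open>\<phi>(\<pi>)\<close>.
  Two \<open>\<beta>R\<close>-convertible terms therefore reduce to a common term, and their translations reduce
  to its translation.\<close>

lemma lift_lift: "i \<le> k \<Longrightarrow> lift (Suc k) (lift i t) = lift i (lift k t)"
  by (induction t arbitrary: i k) auto

lemma lift_subst_ge: "j \<le> i \<Longrightarrow> lift i (subst t j s) = subst (lift (Suc i) t) j (lift i s)"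
  by (induction t arbitrary: i j s) (auto simp: lift_lift)

lemma lift_subst_le: "i \<le> j \<Longrightarrow> lift i (subst t j s) = subst (lift i t) (Suc j) (lift i s)"
  by (induction t arbitrary: i j s) (auto simp: lift_lift)

lemma subst_lift [simp]: "subst (lift k t) k s = t"
  by (induction t arbitrary: k s) auto

lemma subst_subst:
  "i \<le> j \<Longrightarrow> subst (subst t (Suc j) (lift i v)) i (subst u j v) = subst (subst t i u) j v"
  by (induction t arbitrary: i j u v) (auto simp: lift_lift[symmetric] lift_subst_le)

lemma rtranclp_map:
  assumes "\<And>x y. r x y \<Longrightarrow> r' (f x) (f y)" and "r\<^sup>*\<^sup>* x y"
  shows "r'\<^sup>*\<^sup>* (f x) (f y)"
  using assms(2) by induction (auto intro: rtranclp.rtrancl_into_rtrancl assms(1))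

lemma rtranclp_ctxc_App:
  "(ctxc r)\<^sup>*\<^sup>* M M' \<Longrightarrow> (ctxc r)\<^sup>*\<^sup>* N N' \<Longrightarrow> (ctxc r)\<^sup>*\<^sup>* (App M N) (App M' N')"
  using rtranclp_map[of "ctxc r" "ctxc r" "\<lambda>M. App M N"] rtranclp_map[of "ctxc r" "ctxc r" "App M'"]
  by (meson ctxc.appL ctxc.appR rtranclp_trans)

lemma rtranclp_ctxc_Lam:
  "(ctxc r)\<^sup>*\<^sup>* A A' \<Longrightarrow> (ctxc r)\<^sup>*\<^sup>* M M' \<Longrightarrow> (ctxc r)\<^sup>*\<^sup>* (Lam A M) (Lam A' M')"
  using rtranclp_map[of "ctxc r" "ctxc r" "\<lambda>A. Lam A M"] rtranclp_map[of "ctxc r" "ctxc r" "Lam A'"]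
  by (meson ctxc.lamL ctxc.lamR rtranclp_trans)

lemma rtranclp_ctxc_Pi:
  "(ctxc r)\<^sup>*\<^sup>* A A' \<Longrightarrow> (ctxc r)\<^sup>*\<^sup>* B B' \<Longrightarrow> (ctxc r)\<^sup>*\<^sup>* (Pi A B) (Pi A' B')"
  using rtranclp_map[of "ctxc r" "ctxc r" "\<lambda>A. Pi A B"] rtranclp_map[of "ctxc r" "ctxc r" "Pi A'"]
  by (meson ctxc.piL ctxc.piR rtranclp_trans)

lemmas rtranclp_beta_step_App = rtranclp_ctxc_App[of beta_root, folded beta_step_def]
lemmas rtranclp_beta_step_Lam = rtranclp_ctxc_Lam[of beta_root, folded beta_step_def]
lemmas rtranclp_beta_step_Pi = rtranclp_ctxc_Pi[of beta_root, folded beta_step_def]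

lemma psi_App: "psi (App M N) = (case M of Atm (Eps s) \<Rightarrow> phi N | _ \<Rightarrow> None)"
  by (cases M; simp; rename_tac c; case_tac c; simp)

lemma phi_psi_lift:
  "(phi M = Some M' \<longrightarrow> phi (lift k M) = Some (lift k M')) \<and>
   (psi M = Some M' \<longrightarrow> psi (lift k M) = Some (lift k M'))"
proof (induction M arbitrary: k M')
  case (Atm c) then show ?case by (cases c) (auto simp: phi_pi_def)
next
  case (App M N) then show ?case
    by (auto simp: psi_App split: option.splits trm.splits lpconst.splits)
qed (auto split: option.splits)

lemma phi_lift: "phi M = Some M' \<Longrightarrow> phi (lift k M) = Some (lift k M')"
  using phi_psi_lift by blast

lemma phi_psi_subst:
  assumes "phi N = Some N'"
  shows "(phi M = Some M' \<longrightarrow> phi (subst M k N) = Some (subst M' k N')) \<and>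
         (psi M = Some M' \<longrightarrow> psi (subst M k N) = Some (subst M' k N'))"
  using assms
proof (induction M arbitrary: k N N' M')
  case (Atm c) then show ?case by (cases c) (auto simp: phi_pi_def)
next
  case (App M1 M2) then show ?case
    by (auto simp: psi_App split: option.splits trm.splits lpconst.splits)
qed (auto simp: phi_lift split: option.splits)

lemma beta_step_root: "beta_step (App (Lam T M) N) (subst M 0 N)"
  unfolding beta_step_def by (intro ctxc.root beta_root.intros)

lemma beta_steps_phi_pi:
  "beta_step\<^sup>*\<^sup>* (App (App (phi_pi s1 s2) A) B) (Pi A (App (lift 0 B) (Var 0)))"
proof -
  have "beta_step (App (phi_pi s1 s2) A) (Lam (Pi A (Atm s2)) (Pi (lift 0 A) (App (Var 1) (Var 0))))"
    unfolding phi_pi_def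
    using beta_step_root[of "Atm s1" "Lam (Pi (Var 0) (Atm s2)) (Pi (Var 1) (App (Var 1) (Var 0)))" A]
    by simp
  then have "beta_step (App (App (phi_pi s1 s2) A) B)
      (App (Lam (Pi A (Atm s2)) (Pi (lift 0 A) (App (Var 1) (Var 0)))) B)"
    unfolding beta_step_def by (rule ctxc.appL)
  moreover have "beta_step (App (Lam (Pi A (Atm s2)) (Pi (lift 0 A) (App (Var 1) (Var 0)))) B)
      (Pi A (App (lift 0 B) (Var 0)))"
    using beta_step_root[of "Pi A (Atm s2)" "Pi (lift 0 A) (App (Var 1) (Var 0))" B] by simp
  ultimately show ?thesis by auto
qed

lemma betaR_root_simulation:
  assumes "beta_root M N \<or> R_root Ax Rl M N"
  shows "(phi M = Some M' \<longrightarrow> (\<exists>N'. phi N = Some N' \<and> beta_step\<^sup>*\<^sup>* M' N')) \<and>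
         (psi M = Some M' \<longrightarrow> (\<exists>N'. psi N = Some N' \<and> beta_step\<^sup>*\<^sup>* M' N'))"
  using assms
proof
  assume "beta_root M N"
  then obtain A P Q where MN: "M = App (Lam A P) Q" "N = subst P 0 Q" by cases
  have "beta_step (App (Lam A' P') Q') (subst P' 0 Q')" for A' P' Q' :: "'a trm"
    by (rule beta_step_root)
  with MN show ?thesis
    by (auto simp: psi_App phi_psi_subst split: option.splits)
next
  assume "R_root Ax Rl M N"
  then show ?thesis
  proof cases
    case (rl s1 s2 s3 A B)
    then show ?thesis
      using beta_steps_phi_pi[of s1 s2] by (auto simp: psi_App phi_lift split: option.splits)
  qed (auto simp: psi_App)
qed

lemma no_betaR_step_from_Atm: "\<not> betaR_step Ax Rl (Atm c) N"
  unfolding betaR_step_def by (auto elim: ctxc.cases beta_root.cases R_root.cases)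

lemma betaR_step_simulation:
  assumes "betaR_step Ax Rl M N"
  shows "(\<forall>M'. phi M = Some M' \<longrightarrow> (\<exists>N'. phi N = Some N' \<and> beta_step\<^sup>*\<^sup>* M' N')) \<and>
         (\<forall>M'. psi M = Some M' \<longrightarrow> (\<exists>N'. psi N = Some N' \<and> beta_step\<^sup>*\<^sup>* M' N'))"
  using assms unfolding betaR_step_def
proof (induction rule: ctxc.induct)
  case (root M N)
  then show ?case using betaR_root_simulation by blast
next
  case (appL M M1 N)
  have "psi (App M N) = None"
    using appL.hyps no_betaR_step_from_Atm[unfolded betaR_step_def]
    by (auto simp: psi_App split: trm.splits lpconst.splits)
  with appL.IH show ?case by (auto intro: rtranclp_beta_step_App split: option.splits)
qed (auto simp: psi_App intro: rtranclp_beta_step_App rtranclp_beta_step_Lam rtranclp_beta_step_Pi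
      split: option.splits trm.splits lpconst.splits)

lemma betaR_steps_simulation:
  assumes "(betaR_step Ax Rl)\<^sup>*\<^sup>* M N"
  shows "(\<forall>M'. phi M = Some M' \<longrightarrow> (\<exists>N'. phi N = Some N' \<and> beta_step\<^sup>*\<^sup>* M' N')) \<and>
         (\<forall>M'. psi M = Some M' \<longrightarrow> (\<exists>N'. psi N = Some N' \<and> beta_step\<^sup>*\<^sup>* M' N'))"
  using assms
proof (induction rule: rtranclp_induct)
  case (step N P)
  then show ?case using betaR_step_simulation[OF step.hyps(2)] by (meson rtranclp_trans)
qed auto

inductive par :: "('s \<times> 's) set \<Rightarrow> ('s \<times> 's \<times> 's) set \<Rightarrow> 's lpterm \<Rightarrow> 's lpterm \<Rightarrow> bool"
  for Ax Rl where
  par_Atm: "par Ax Rl (Atm c) (Atm c)"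
| par_Var: "par Ax Rl (Var i) (Var i)"
| par_App: "par Ax Rl M M' \<Longrightarrow> par Ax Rl N N' \<Longrightarrow> par Ax Rl (App M N) (App M' N')"
| par_Lam: "par Ax Rl A A' \<Longrightarrow> par Ax Rl M M' \<Longrightarrow> par Ax Rl (Lam A M) (Lam A' M')"
| par_Pi: "par Ax Rl A A' \<Longrightarrow> par Ax Rl B B' \<Longrightarrow> par Ax Rl (Pi A B) (Pi A' B')"
| par_beta: "par Ax Rl M M' \<Longrightarrow> par Ax Rl N N' \<Longrightarrow> par Ax Rl (App (Lam A M) N) (subst M' 0 N')"
| par_ax: "(s1, s2) \<in> Ax \<Longrightarrow> par Ax Rl (App (Atm (Eps s2)) (Atm (Dot s1))) (Atm (U s1))"
| par_rl: "(s1, s2, s3) \<in> Rl \<Longrightarrow> par Ax Rl A A' \<Longrightarrow> par Ax Rl B B' \<Longrightarrow>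
     par Ax Rl (App (Atm (Eps s3)) (App (App (Atm (PiC s1 s2 s3)) A) B))
       (Pi (App (Atm (Eps s1)) A') (App (Atm (Eps s2)) (App (lift 0 B') (Var 0))))"

inductive_cases par_AtmE: "par Ax Rl (Atm c) X"
inductive_cases par_LamE: "par Ax Rl (Lam A M) X"
inductive_cases par_AppE: "par Ax Rl (App M N) X"

lemma par_refl [simp, intro]: "par Ax Rl M M"
  by (induction M) (auto intro: par.intros)

lemma par_lift: "par Ax Rl M M' \<Longrightarrow> par Ax Rl (lift k M) (lift k M')"
proof (induction arbitrary: k rule: par.induct)
  case (par_beta M M' N N' A)
  then show ?case
    using par.par_beta[of Ax Rl "lift (Suc k) M" "lift (Suc k) M'" "lift k N" "lift k N'" "lift k A"]
    by (simp add: lift_subst_ge)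
next
  case (par_rl s1 s2 s3 A A' B B')
  then show ?case
    using par.par_rl[of s1 s2 s3 Rl Ax "lift k A" "lift k A'" "lift k B" "lift k B'"]
    by (simp add: lift_lift)
qed (auto intro: par.intros)

lemma par_subst:
  "par Ax Rl M M' \<Longrightarrow> par Ax Rl N N' \<Longrightarrow> par Ax Rl (subst M k N) (subst M' k N')"
proof (induction arbitrary: k N N' rule: par.induct)
  case (par_beta M M' P P' A)
  then show ?case
    using par.par_beta[of Ax Rl "subst M (Suc k) (lift 0 N)" "subst M' (Suc k) (lift 0 N')"
        "subst P k N" "subst P' k N'" "subst A k N"]
    by (simp add: subst_subst[of 0 k, symmetric] par_lift)
next
  case (par_rl s1 s2 s3 A A' B B')
  then show ?case
    using par.par_rl[of s1 s2 s3 Rl Ax "subst A k N" "subst A' k N'" "subst B k N" "subst B' k N'"]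
    by (simp add: lift_subst_le)
next
  case (par_Lam A A' M M')
  then show ?case by (simp add: par.par_Lam par_lift)
next
  case (par_Pi A A' B B')
  then show ?case by (simp add: par.par_Pi par_lift)
qed (auto intro: par.intros)

fun cd :: "('s \<times> 's) set \<Rightarrow> ('s \<times> 's \<times> 's) set \<Rightarrow> 's lpterm \<Rightarrow> 's lpterm" where
  "cd Ax Rl (App (Lam A M) N) = subst (cd Ax Rl M) 0 (cd Ax Rl N)"
| "cd Ax Rl (App (Atm (Eps s2)) (Atm (Dot s1))) =
     (if (s1, s2) \<in> Ax then Atm (U s1) else App (Atm (Eps s2)) (Atm (Dot s1)))"
| "cd Ax Rl (App (Atm (Eps s3)) (App (App (Atm (PiC s1 s2 s3')) A) B)) =
     (if s3' = s3 \<and> (s1, s2, s3) \<in> Rl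
      then Pi (App (Atm (Eps s1)) (cd Ax Rl A)) (App (Atm (Eps s2)) (App (lift 0 (cd Ax Rl B)) (Var 0)))
      else App (Atm (Eps s3)) (App (App (Atm (PiC s1 s2 s3')) (cd Ax Rl A)) (cd Ax Rl B)))"
| "cd Ax Rl (App M N) = App (cd Ax Rl M) (cd Ax Rl N)"
| "cd Ax Rl (Lam A M) = Lam (cd Ax Rl A) (cd Ax Rl M)"
| "cd Ax Rl (Pi A M) = Pi (cd Ax Rl A) (cd Ax Rl M)"
| "cd Ax Rl t = t"

lemma cd_App_cases:
  obtains (beta) A M0 where "M = Lam A M0"
  | (ax) s1 s2 where "(s1, s2) \<in> Ax" "M = Atm (Eps s2)" "N = Atm (Dot s1)"
  | (rl) s1 s2 s3 A B where "(s1, s2, s3) \<in> Rl" "M = Atm (Eps s3)"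
      "N = App (App (Atm (PiC s1 s2 s3)) A) B"
  | (no_redex) "cd Ax Rl (App M N) = App (cd Ax Rl M) (cd Ax Rl N)"
  by (cases "(Ax, Rl, App M N)" rule: cd.cases) (auto, metis+)

lemma par_cd_App:
  assumes "par Ax Rl M M'" "par Ax Rl N N'"
    and "par Ax Rl M' (cd Ax Rl M)" "par Ax Rl N' (cd Ax Rl N)"
  shows "par Ax Rl (App M' N') (cd Ax Rl (App M N))"
proof (cases rule: cd_App_cases[where M = M and N = N and Ax = Ax and Rl = Rl])
  case (beta A M0)
  with assms obtain A' M0' where "M' = Lam A' M0'" "par Ax Rl M0' (cd Ax Rl M0)"
    by (auto elim!: par_LamE)
  with beta assms(4) show ?thesis by (simp add: par.par_beta)
next
  case (ax s1 s2)
  with assms show ?thesis by (auto elim!: par_AtmE intro: par.par_ax)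
next
  case (rl s1 s2 s3 A B)
  with assms obtain A' B' where "M' = M" "N' = App (App (Atm (PiC s1 s2 s3)) A') B'"
      "par Ax Rl A' (cd Ax Rl A)" "par Ax Rl B' (cd Ax Rl B)"
    by (auto elim!: par_AppE par_AtmE)
  with rl show ?thesis by (simp add: par.par_rl)
next
  case no_redex
  with assms show ?thesis by (simp add: par.par_App)
qed

lemma par_cd: "par Ax Rl M N \<Longrightarrow> par Ax Rl N (cd Ax Rl M)"
proof (induction rule: par.induct)
  case (par_App M M' N N')
  then show ?case by (rule par_cd_App)
next
  case (par_beta M M' N N' A)
  then show ?case by (simp add: par_subst)
next
  case (par_rl s1 s2 s3 A A' B B')
  then show ?case by (simp add: par.par_Pi par.par_App par_lift)
qed (simp_all add: par.intros)

lemma betaR_step_imp_par: "betaR_step Ax Rl M N \<Longrightarrow> par Ax Rl M N"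
  unfolding betaR_step_def
proof (induction rule: ctxc.induct)
  case (root M N)
  then show ?case by (auto elim!: beta_root.cases R_root.cases intro: par.intros)
qed (auto intro: par.intros)

lemma par_imp_betaR_steps: "par Ax Rl M N \<Longrightarrow> (betaR_step Ax Rl)\<^sup>*\<^sup>* M N"
  unfolding betaR_step_def
proof (induction rule: par.induct)
  case (par_beta M M' N N' A)
  then have "(ctxc (\<lambda>M N. beta_root M N \<or> R_root Ax Rl M N))\<^sup>*\<^sup>* (App (Lam A M) N) (App (Lam A M') N')"
    by (intro rtranclp_ctxc_App rtranclp_ctxc_Lam) auto
  then show ?case
    by (rule rtranclp.rtrancl_into_rtrancl) (intro ctxc.root disjI1 beta_root.intros)
next
  case (par_ax s1 s2)
  then show ?case by (intro r_into_rtranclp ctxc.root disjI2 R_root.intros)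
next
  case (par_rl s1 s2 s3 A A' B B')
  then have "(ctxc (\<lambda>M N. beta_root M N \<or> R_root Ax Rl M N))\<^sup>*\<^sup>*
      (App (Atm (Eps s3)) (App (App (Atm (PiC s1 s2 s3)) A) B))
      (App (Atm (Eps s3)) (App (App (Atm (PiC s1 s2 s3)) A') B'))"
    by (intro rtranclp_ctxc_App) auto
  with par_rl show ?case
    by (elim rtranclp.rtrancl_into_rtrancl) (intro ctxc.root disjI2 R_root.intros)
qed (auto intro: rtranclp_ctxc_App rtranclp_ctxc_Lam rtranclp_ctxc_Pi)

lemma rtranclp_betaR_step_eq_par: "(betaR_step Ax Rl)\<^sup>*\<^sup>* = (par Ax Rl)\<^sup>*\<^sup>*"
  by (rule rtranclp_subset[symmetric]) (auto intro: betaR_step_imp_par par_imp_betaR_steps)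

lemma confluentp_betaR_step: "confluentp (betaR_step Ax Rl)"
proof -
  have "strong_confluentp (par Ax Rl)"
    by (rule strong_confluentpI) (metis par_cd r_into_rtranclp sup2I1)
  then have "confluentp (par Ax Rl)"
    by (rule strong_confluentp_imp_confluentp)
  then show ?thesis
    unfolding confluentp_conv_strong_confluentp_rtranclp rtranclp_betaR_step_eq_par .
qed

lemma betaR_conv_common_reduct:
  assumes "betaR_conv Ax Rl M N"
  obtains P where "(betaR_step Ax Rl)\<^sup>*\<^sup>* M P" "(betaR_step Ax Rl)\<^sup>*\<^sup>* N P"
proof -
  have "equivclp (betaR_step Ax Rl) = (betaR_step Ax Rl)\<^sup>*\<^sup>* OO (betaR_step Ax Rl)\<inverse>\<inverse>\<^sup>*\<^sup>*"
    by (intro semiconfluentp_equivclp confluentp_imp_semiconfluentp confluentp_betaR_step)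
  with assms have "((betaR_step Ax Rl)\<^sup>*\<^sup>* OO (betaR_step Ax Rl)\<^sup>*\<^sup>*\<inverse>\<inverse>) M N"
    unfolding betaR_conv_def by (simp add: rtranclp_conversep)
  with that show ?thesis by blast
qed

lemma beta_conv_if_simulates_betaR_steps:
  assumes simulation: "\<And>M N M'. (betaR_step Ax Rl)\<^sup>*\<^sup>* M N \<Longrightarrow> f M = Some M' \<Longrightarrow>
      \<exists>N'. f N = Some N' \<and> beta_step\<^sup>*\<^sup>* M' N'"
    and "betaR_conv Ax Rl M N" "f M = Some M'" "f N = Some N'"
  shows "beta_conv M' N'"
proof -
  obtain P where "(betaR_step Ax Rl)\<^sup>*\<^sup>* M P" "(betaR_step Ax Rl)\<^sup>*\<^sup>* N P"
    using assms(2) by (rule betaR_conv_common_reduct)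
  with simulation assms(3,4) obtain P' where "beta_step\<^sup>*\<^sup>* M' P'" "beta_step\<^sup>*\<^sup>* N' P'"
    by (metis option.inject)
  then show ?thesis
    unfolding beta_conv_def by (meson equivclp_sym equivclp_trans rtranclp_into_equivclp)
qed

theorem lemma5p12:
  fixes S :: "'s set" and Ax :: "('s \<times> 's) set" and Rl :: "('s \<times> 's \<times> 's) set"
  assumes "functional_pts S Ax Rl"
  shows "(\<forall>M N M' N'. wf_lp S Ax Rl M \<and> wf_lp S Ax Rl N \<and> phi M = Some M' \<and> phi N = Some N'
            \<and> betaR_conv Ax Rl M N \<longrightarrow> beta_conv M' N')
       \<and> (\<forall>A B A' B'. wf_lp S Ax Rl A \<and> wf_lp S Ax Rl B \<and> psi A = Some A' \<and> psi B = Some B'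
            \<and> betaR_conv Ax Rl A B \<longrightarrow> beta_conv A' B')"
  using beta_conv_if_simulates_betaR_steps[of Ax Rl phi] beta_conv_if_simulates_betaR_steps[of Ax Rl psi]
    betaR_steps_simulation[of Ax Rl]
  by blast

end
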